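(* Let $p\in[2,3)$, $N\in\mathbb N$, $d,n\ge1$, let $f=(f_1,\dots,f_d)$ be vector fields on $\mathbb R^n$ of class $C^2_b$, let $\mathbf w=(\mathbf w_0,\dots,\mathbf w_N)$ be a time series in $\mathbb R^d$, and let $\mathbf x$ solve $\mathbf x_{k+1}=\mathbf x_k+\sum_{\mu=1}^df_\mu(\mathbf x_k)(\mathbf w^\mu_{k+1}-\mathbf w^\mu_k)$, $\mathbf x_0=\xi\in\mathbb R^n$. Define for $0\le k<l\le N$ \[ I_{k,l}\coloneqq\mathbf x_{k,l}-\sum_{\mu=1}^df_\mu(\mathbf x_k)\mathbf w^\mu_{k,l},\qquad J^\mu_{k,l}\coloneqq f_\mu(\mathbf x_l)-f_\mu(\mathbf x_k)-\sum_{\nu=1}^dDf_\mu(\mathbf x_k)f_\nu(\mathbf x_k)\mathbf w^\nu_{k,l}, \] where $\mathbf x_{k,l}=\mathbf x_l-\mathbf x_k$, $\mathbf w_{k,l}=\mathbf w_l-\mathbf w_k$. Then for all $0\le k<l\le N$, \[ \max_{\mu=1,\dots,d}\|J^\mu\|_{p/2;[k,l]}\le 2^{1-2/p}\|f\|_{C^2_b}\Big(\|I\|^{p/2}_{p/2;[k,l]}+\tfrac12\|\mathbf x\|^p_{p;[k,l]}\Big)^{2/p}. \]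
   Context: $\mathbb R^n$ carries a fixed norm and derivatives use operator norms; $\|f\|_{C^2_b}\coloneqq\max_\mu\max_{j=1,2}\|D^jf_\mu\|_\infty$. $\mathcal S_{k,l}$ is the set of increasing integer sequences $s=(s_0=k<\dots<s_{m+1}=l)$, $\#s=m$; for a time series $\|\mathbf x\|_{q;[k,l]}\coloneqq(\max_s\sum_{j=0}^{\#s}|\mathbf x_{s_{j+1}}-\mathbf x_{s_j}|^q)^{1/q}$, and for a triangular array $(\Xi_{k,l})_{k<l}$, $\|\Xi\|_{q;[k,l]}\coloneqq(\max_s\sum_{j=0}^{\#s}|\Xi_{s_j,s_{j+1}}|^q)^{1/q}$. *)

theory Defs
  imports "HOL-Analysis.Analysis"
begin

definition partitions :: "nat \<Rightarrow> nat \<Rightarrow> nat list set" where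
  "partitions k l = {s. 2 \<le> length s \<and> sorted_wrt (<) s \<and> hd s = k \<and> last s = l}"

definition var_sum :: "real \<Rightarrow> (nat \<Rightarrow> nat \<Rightarrow> 'b::real_normed_vector) \<Rightarrow> nat list \<Rightarrow> real" where
  "var_sum q F s = (\<Sum>j < length s - 1. norm (F (s ! j) (s ! Suc j)) powr q)"

definition pvar :: "real \<Rightarrow> (nat \<Rightarrow> nat \<Rightarrow> 'b::real_normed_vector) \<Rightarrow> nat \<Rightarrow> nat \<Rightarrow> real" where
  "pvar q F k l = (Max (var_sum q F ` partitions k l)) powr (1 / q)"

definition pvar_ts :: "real \<Rightarrow> (nat \<Rightarrow> 'b::real_normed_vector) \<Rightarrow> nat \<Rightarrow> nat \<Rightarrow> real" where
  "pvar_ts q x k l = pvar q (\<lambda>a b. x b - x a) k l"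

definition C2b_norm :: "nat \<Rightarrow> (nat \<Rightarrow> 'a::real_normed_vector \<Rightarrow> 'a \<Rightarrow>\<^sub>L 'a)
      \<Rightarrow> (nat \<Rightarrow> 'a \<Rightarrow> 'a \<Rightarrow>\<^sub>L ('a \<Rightarrow>\<^sub>L 'a)) \<Rightarrow> real" where
  "C2b_norm d Df D2f = Max ((\<lambda>\<mu>. max (SUP x. norm (Df \<mu> x)) (SUP x. norm (D2f \<mu> x))) ` {1..d})"

end

theory Submission
  imports Defs
begin

text \<open>Since \<open>J\<^sup>\<mu>(k,l) = [f\<^sub>\<mu>(x l) - f\<^sub>\<mu>(x k) - Df\<^sub>\<mu>(x k)(x l - x k)] + Df\<^sub>\<mu>(x k) I(k,l)\<close>,
  Taylor's formula bounds \<open>|J\<^sup>\<mu>(k,l)|\<close> by \<open>|f|\<^sub>C\<^sub>2 (|I(k,l)| + |x l - x k|\<^sup>2 / 2)\<close> for each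
  single pair \<open>k < l\<close>. Raising this to the power \<open>q = p/2\<close> with
  \<open>(a + b)\<^sup>q \<le> 2\<^sup>q\<^sup>-\<^sup>1 (a\<^sup>q + b\<^sup>q)\<close> makes the bound linear in \<open>|I(k,l)|\<^sup>q\<close> and
  \<open>|x l - x k|\<^sup>p\<close>, and such bounds pass to variation norms by summing over a partition.\<close>

lemma powr_add_le_convex:
  fixes a b q :: real
  assumes "0 \<le> a" "0 \<le> b" "1 \<le> q"
  shows "(a + b) powr q \<le> 2 powr (q - 1) * (a powr q + b powr q)"
proof (cases "a = 0 \<or> b = 0")
  case True
  have "1 \<le> 2 powr (q - 1)"
    using assms(3) by (simp add: ge_one_powr_ge_zero)
  with True show ?thesis
    by (auto simp: mult_le_cancel_right1)
next
  case False
  have "((a + b) / 2) powr q = ((1 - 1/2) *\<^sub>R a + (1/2) *\<^sub>R b) powr q"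
    by (simp add: field_simps)
  also have "\<dots> \<le> (1 - 1/2) * a powr q + (1/2) * b powr q"
    using assms False by (intro convex_onD[OF powr_convex[OF assms(3)]]) auto
  finally have "((a + b) / 2) powr q \<le> (a powr q + b powr q) / 2"
    by simp
  moreover have "(a + b) powr q = 2 * 2 powr (q - 1) * ((a + b) / 2) powr q"
    using assms by (simp add: powr_diff powr_divide)
  ultimately show ?thesis
    by simp
qed

lemma norm_taylor2_remainder_le:
  fixes f :: "'a::real_normed_vector \<Rightarrow> 'b::real_normed_vector" and Df :: "'a \<Rightarrow> 'a \<Rightarrow>\<^sub>L 'b"
    and D2f :: "'a \<Rightarrow> 'a \<Rightarrow>\<^sub>L ('a \<Rightarrow>\<^sub>L 'b)"
  assumes Df: "\<And>y. (f has_derivative blinfun_apply (Df y)) (at y)"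
    and D2f: "\<And>y. (Df has_derivative blinfun_apply (D2f y)) (at y)"
    and M: "\<And>y. norm (D2f y) \<le> M"
  shows "norm (f y - f x - Df x (y - x)) \<le> M / 2 * norm (y - x) ^ 2"
proof -
  define h where "h = y - x"
  have Df_lipschitz: "norm (Df z - Df x) \<le> M * norm (z - x)" for z
    by (rule differentiable_bound[of UNIV Df "\<lambda>y. blinfun_apply (D2f y)" M z x])
       (auto simp: D2f M norm_blinfun.rep_eq[symmetric])
  define g where "g t = f (x + t *\<^sub>R h) - t *\<^sub>R Df x h" for t
  define g' where "g' t = Df (x + t *\<^sub>R h) h - Df x h" for t
  define \<phi> where "\<phi> t = M * norm h ^ 2 * t\<^sup>2 / 2" for t
  have g_deriv: "(g has_vector_derivative g' t) (at t)" for t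
  proof -
    have "((\<lambda>t. x + t *\<^sub>R h) has_derivative (\<lambda>s. s *\<^sub>R h)) (at t)"
      by (auto intro!: derivative_eq_intros)
    from has_derivative_compose[OF this Df]
    have "((\<lambda>t. f (x + t *\<^sub>R h)) has_derivative (\<lambda>s. s *\<^sub>R Df (x + t *\<^sub>R h) h)) (at t)"
      by (simp add: blinfun.scaleR_right o_def)
    then show ?thesis
      unfolding g_def g'_def has_vector_derivative_def
      by (auto intro!: derivative_eq_intros simp: algebra_simps)
  qed
  have \<phi>_deriv: "(\<phi> has_vector_derivative (M * norm h ^ 2 * t)) (at t)" for t
    unfolding \<phi>_def has_vector_derivative_def
    by (auto intro!: derivative_eq_intros simp: algebra_simps)
  have g'_le: "norm (g' t) \<le> M * norm h ^ 2 * t" if "0 < t" for t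
  proof -
    have "norm (g' t) = norm ((Df (x + t *\<^sub>R h) - Df x) h)"
      unfolding g'_def by (simp add: blinfun.diff_left)
    also have "\<dots> \<le> norm (Df (x + t *\<^sub>R h) - Df x) * norm h"
      by (rule norm_blinfun)
    also have "\<dots> \<le> M * norm (t *\<^sub>R h) * norm h"
      using Df_lipschitz[of "x + t *\<^sub>R h"] by (intro mult_right_mono) auto
    also have "\<dots> = M * norm h ^ 2 * t"
      using that by (simp add: power2_eq_square)
    finally show ?thesis .
  qed
  have "continuous_on {0..1} g"
    using g_deriv by (meson continuous_at_imp_continuous_on has_vector_derivative_continuous)
  moreover have "continuous_on {0..1} \<phi>"
    unfolding \<phi>_def by (intro continuous_intros) auto
  ultimately have "norm (g 1 - g 0) \<le> \<phi> 1 - \<phi> 0"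
    using g'_le by (intro differentiable_bound_general[OF zero_less_one _ _ g_deriv \<phi>_deriv]) auto
  then show ?thesis
    unfolding g_def \<phi>_def h_def by (simp add: algebra_simps)
qed

lemma norm_linearization_error_le:
  fixes f :: "'a::real_normed_vector \<Rightarrow> 'b::real_normed_vector" and Df :: "'a \<Rightarrow> 'a \<Rightarrow>\<^sub>L 'b"
    and D2f :: "'a \<Rightarrow> 'a \<Rightarrow>\<^sub>L ('a \<Rightarrow>\<^sub>L 'b)"
  assumes Df: "\<And>y. (f has_derivative blinfun_apply (Df y)) (at y)"
    and D2f: "\<And>y. (Df has_derivative blinfun_apply (D2f y)) (at y)"
    and Df_le: "\<And>y. norm (Df y) \<le> C" and D2f_le: "\<And>y. norm (D2f y) \<le> C"
  shows "norm (f v - f u - Df u (v - u - e)) \<le> C * (norm e + norm (v - u) ^ 2 / 2)"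
proof -
  have "f v - f u - Df u (v - u - e) = (f v - f u - Df u (v - u)) + Df u e"
    by (simp add: blinfun.diff_right)
  also have "norm \<dots> \<le> C / 2 * norm (v - u) ^ 2 + norm (Df u) * norm e"
    using norm_taylor2_remainder_le[OF Df D2f D2f_le, of v u] norm_blinfun[of "Df u" e]
    by (intro norm_triangle_le add_mono) auto
  also have "\<dots> \<le> C / 2 * norm (v - u) ^ 2 + C * norm e"
    using Df_le by (intro add_left_mono mult_right_mono) auto
  finally show ?thesis
    by (simp add: algebra_simps)
qed

lemma powr_linear_quadratic_le:
  fixes A B C q :: real
  assumes "0 \<le> A" "0 \<le> B" "0 \<le> C" "1 \<le> q"
  shows "(C * (A + B ^ 2 / 2)) powr q
    \<le> (2 powr (1 - 1 / q) * C) powr q * (A powr q + 1 / 2 * B powr (2 * q))"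
proof -
  have "(B ^ 2) powr q = B powr (2 * q)"
    using assms(2) by (subst powr_numeral[symmetric]) (simp_all only: powr_powr)
  then have "(B ^ 2 / 2) powr q = (1 / 2) powr q * B powr (2 * q)"
    using powr_mult[of "1 / 2" "B ^ 2" q] by simp
  moreover have "(1 / 2 :: real) powr q \<le> 1 / 2"
    using powr_mono'[OF assms(4), of "1 / 2 :: real"] by simp
  ultimately have half_square: "(B ^ 2 / 2) powr q \<le> 1 / 2 * B powr (2 * q)"
    by (metis mult_right_mono powr_ge_zero)
  have "(1 - 1 / q) * q = q - 1"
    using assms(4) by (simp add: field_simps)
  then have scale: "(2 powr (1 - 1 / q) * C) powr q = 2 powr (q - 1) * C powr q"
    using assms(3) by (simp add: powr_mult powr_powr)
  have "(C * (A + B ^ 2 / 2)) powr q = C powr q * (A + B ^ 2 / 2) powr q"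
    using assms by (simp add: powr_mult)
  also have "\<dots> \<le> C powr q * (2 powr (q - 1) * (A powr q + (B ^ 2 / 2) powr q))"
    using assms by (intro mult_left_mono powr_add_le_convex) auto
  also have "\<dots> \<le> C powr q * (2 powr (q - 1) * (A powr q + 1 / 2 * B powr (2 * q)))"
    using half_square by (intro mult_left_mono add_left_mono) auto
  finally show ?thesis
    unfolding scale by (simp add: mult_ac)
qed

lemma powr_norm_linearization_error_le:
  fixes f :: "'a::real_normed_vector \<Rightarrow> 'b::real_normed_vector" and Df :: "'a \<Rightarrow> 'a \<Rightarrow>\<^sub>L 'b"
    and D2f :: "'a \<Rightarrow> 'a \<Rightarrow>\<^sub>L ('a \<Rightarrow>\<^sub>L 'b)"
  assumes Df: "\<And>y. (f has_derivative blinfun_apply (Df y)) (at y)"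
    and D2f: "\<And>y. (Df has_derivative blinfun_apply (D2f y)) (at y)"
    and Df_le: "\<And>y. norm (Df y) \<le> C" and D2f_le: "\<And>y. norm (D2f y) \<le> C"
    and "1 \<le> q"
  shows "norm (f v - f u - Df u (v - u - e)) powr q
    \<le> (2 powr (1 - 1 / q) * C) powr q * (norm e powr q + 1 / 2 * norm (v - u) powr (2 * q))"
proof -
  have "0 \<le> C"
    using norm_ge_zero Df_le by (rule order_trans)
  have "norm (f v - f u - Df u (v - u - e)) powr q \<le> (C * (norm e + norm (v - u) ^ 2 / 2)) powr q"
    using norm_linearization_error_le[OF Df D2f Df_le D2f_le] \<open>1 \<le> q\<close> by (intro powr_mono2) auto
  also have "\<dots> \<le> (2 powr (1 - 1 / q) * C) powr q * (norm e powr q + 1 / 2 * norm (v - u) powr (2 * q))"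
    using \<open>0 \<le> C\<close> \<open>1 \<le> q\<close> by (intro powr_linear_quadratic_le) auto
  finally show ?thesis .
qed

lemma finite_partitions: "finite (partitions k l)"
proof (rule finite_subset)
  show "partitions k l \<subseteq> {s. set s \<subseteq> {..l} \<and> length s \<le> Suc l}"
  proof
    fix s assume "s \<in> partitions k l"
    then have s: "2 \<le> length s" "sorted_wrt (<) s" "last s = l"
      by (auto simp: partitions_def)
    have "set s \<subseteq> {..l}"
    proof
      fix y assume "y \<in> set s"
      then obtain i where i: "i < length s" "y = s ! i"
        by (metis in_set_conv_nth)
      have "sorted s"
        using s(2) by (simp add: strict_sorted_iff)
      then have "s ! i \<le> s ! (length s - 1)"
        using i by (intro sorted_nth_mono) auto
      then show "y \<in> {..l}"
        using s(1,3) i last_conv_nth[of s] by (cases s) auto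
    qed
    moreover have "distinct s"
      using s(2) by (simp add: strict_sorted_iff)
    ultimately have "length s \<le> Suc l"
      by (metis card_atMost card_mono distinct_card finite_atMost)
    with \<open>set s \<subseteq> {..l}\<close> show "s \<in> {s. set s \<subseteq> {..l} \<and> length s \<le> Suc l}"
      by simp
  qed
  show "finite {s. set s \<subseteq> {..l} \<and> length s \<le> Suc l}"
    by (rule finite_lists_length_le) simp
qed

lemma trivial_partition: "k < l \<Longrightarrow> [k, l] \<in> partitions k l"
  by (simp add: partitions_def)

lemma var_sum_nonneg: "0 \<le> var_sum q F s"
  unfolding var_sum_def by (intro sum_nonneg) simp

lemma pvar_powr:
  assumes "k < l" "0 < q"
  shows "pvar q F k l powr q = Max (var_sum q F ` partitions k l)"
proof -
  have "0 \<le> Max (var_sum q F ` partitions k l)"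
    using trivial_partition[OF assms(1)] finite_partitions
    by (intro Max_ge_iff[THEN iffD2]) (auto intro!: bexI var_sum_nonneg)
  then show ?thesis
    using assms(2) by (simp add: pvar_def powr_powr)
qed

lemma pvar_le_of_pointwise:
  assumes "k < l" "0 < q" "0 < r" "0 \<le> L" "0 \<le> c"
    and pointwise: "\<And>a b. norm (F a b) powr q
      \<le> L powr q * (norm (G a b) powr q + c * norm (H a b) powr r)"
  shows "pvar q F k l \<le> L * (pvar q G k l powr q + c * pvar r H k l powr r) powr (1 / q)"
proof -
  define S where "S = pvar q G k l powr q + c * pvar r H k l powr r"
  have S_nonneg: "0 \<le> S"
    unfolding S_def using assms(5) by simp
  have "var_sum q F s \<le> L powr q * S" if "s \<in> partitions k l" for s
  proof -
    have "var_sum q F s \<le> (\<Sum>j < length s - 1. L powr q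
        * (norm (G (s ! j) (s ! Suc j)) powr q + c * norm (H (s ! j) (s ! Suc j)) powr r))"
      unfolding var_sum_def by (intro sum_mono pointwise)
    also have "\<dots> = L powr q * (var_sum q G s + c * var_sum r H s)"
      unfolding var_sum_def by (simp add: sum_distrib_left sum.distrib algebra_simps)
    also have "\<dots> \<le> L powr q * S"
      unfolding S_def pvar_powr[OF assms(1,2)] pvar_powr[OF assms(1,3)]
      using that finite_partitions assms(5) by (intro mult_left_mono add_mono) auto
    finally show ?thesis .
  qed
  then have "Max (var_sum q F ` partitions k l) \<le> L powr q * S"
    using trivial_partition[OF assms(1)] finite_partitions by (subst Max_le_iff) auto
  then have "pvar q F k l \<le> (L powr q * S) powr (1 / q)"
    unfolding pvar_def using assms(2) trivial_partition[OF assms(1)] finite_partitions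
    by (intro powr_mono2) (auto intro!: Max_ge_iff[THEN iffD2] bexI var_sum_nonneg)
  also have "\<dots> = L * S powr (1 / q)"
    using assms(2,4) S_nonneg by (simp add: powr_mult powr_powr)
  finally show ?thesis
    unfolding S_def .
qed

lemma norm_Df_le_C2b_norm:
  assumes "\<mu> \<in> {1..d}" "bounded (range (Df \<mu>))"
  shows "norm (Df \<mu> y) \<le> C2b_norm d Df D2f"
proof -
  have "norm (Df \<mu> y) \<le> (SUP z. norm (Df \<mu> z))"
    using bdd_above_norm[THEN iffD2, OF assms(2)] by (intro cSUP_upper) (auto simp: image_image)
  also have "\<dots> \<le> C2b_norm d Df D2f"
    unfolding C2b_norm_def using assms(1) by (intro Max.coboundedI[THEN order_trans[rotated]]) auto
  finally show ?thesis .
qed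

lemma norm_D2f_le_C2b_norm:
  assumes "\<mu> \<in> {1..d}" "bounded (range (D2f \<mu>))"
  shows "norm (D2f \<mu> y) \<le> C2b_norm d Df D2f"
proof -
  have "norm (D2f \<mu> y) \<le> (SUP z. norm (D2f \<mu> z))"
    using bdd_above_norm[THEN iffD2, OF assms(2)] by (intro cSUP_upper) (auto simp: image_image)
  also have "\<dots> \<le> C2b_norm d Df D2f"
    unfolding C2b_norm_def using assms(1) by (intro Max.coboundedI[THEN order_trans[rotated]]) auto
  finally show ?thesis .
qed

theorem lemma5p7:
  fixes p :: real and N d :: nat
    and f :: "nat \<Rightarrow> 'a::real_normed_vector \<Rightarrow> 'a"
    and Df :: "nat \<Rightarrow> 'a \<Rightarrow> 'a \<Rightarrow>\<^sub>L 'a"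
    and D2f :: "nat \<Rightarrow> 'a \<Rightarrow> 'a \<Rightarrow>\<^sub>L ('a \<Rightarrow>\<^sub>L 'a)"
    and w :: "nat \<Rightarrow> nat \<Rightarrow> real"
    and x :: "nat \<Rightarrow> 'a" and \<xi> :: 'a
    and k l :: nat
  assumes hp: "2 \<le> p" "p < 3"
    and hd: "1 \<le> d"
    and Df: "\<And>\<mu> y. \<mu> \<in> {1..d} \<Longrightarrow> (f \<mu> has_derivative blinfun_apply (Df \<mu> y)) (at y)"
    and D2f: "\<And>\<mu> y. \<mu> \<in> {1..d} \<Longrightarrow> (Df \<mu> has_derivative blinfun_apply (D2f \<mu> y)) (at y)"
    and D2f_cont: "\<And>\<mu>. \<mu> \<in> {1..d} \<Longrightarrow> continuous_on UNIV (D2f \<mu>)"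
    and Df_bdd: "\<And>\<mu>. \<mu> \<in> {1..d} \<Longrightarrow> bounded (range (Df \<mu>))"
    and D2f_bdd: "\<And>\<mu>. \<mu> \<in> {1..d} \<Longrightarrow> bounded (range (D2f \<mu>))"
    and x0: "x 0 = \<xi>"
    and xrec: "\<And>j. j < N \<Longrightarrow>
       x (Suc j) = x j + (\<Sum>\<mu>=1..d. (w (Suc j) \<mu> - w j \<mu>) *\<^sub>R f \<mu> (x j))"
    and kl: "k < l" "l \<le> N"
  shows
   "(let I = (\<lambda>a b. x b - x a - (\<Sum>\<mu>=1..d. (w b \<mu> - w a \<mu>) *\<^sub>R f \<mu> (x a)));
         J = (\<lambda>\<mu> a b. f \<mu> (x b) - f \<mu> (x a)
                - (\<Sum>\<nu>=1..d. (w b \<nu> - w a \<nu>) *\<^sub>R Df \<mu> (x a) (f \<nu> (x a))))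
     in Max ((\<lambda>\<mu>. pvar (p / 2) (J \<mu>) k l) ` {1..d})
        \<le> 2 powr (1 - 2 / p) * C2b_norm d Df D2f
           * (pvar (p / 2) I k l powr (p / 2) + 1 / 2 * pvar_ts p x k l powr p) powr (2 / p))"
proof -
  define I where "I = (\<lambda>a b. x b - x a - (\<Sum>\<mu>=1..d. (w b \<mu> - w a \<mu>) *\<^sub>R f \<mu> (x a)))"
  define J where "J = (\<lambda>\<mu> a b. f \<mu> (x b) - f \<mu> (x a)
                - (\<Sum>\<nu>=1..d. (w b \<nu> - w a \<nu>) *\<^sub>R Df \<mu> (x a) (f \<nu> (x a))))"
  define C where "C = C2b_norm d Df D2f"
  define L where "L = 2 powr (1 - 2 / p) * C"
  have Df_le: "norm (Df \<mu> y) \<le> C" and D2f_le: "norm (D2f \<mu> y) \<le> C"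
    if "\<mu> \<in> {1..d}" for \<mu> y
    unfolding C_def using that Df_bdd D2f_bdd
    by (intro norm_Df_le_C2b_norm norm_D2f_le_C2b_norm; simp)+
  have C_nonneg: "0 \<le> C"
    using Df_le[of 1] hd by (meson atLeastAtMost_iff le_refl norm_ge_zero order_trans)
  have pointwise: "norm (J \<mu> a b) powr (p / 2)
      \<le> L powr (p / 2) * (norm (I a b) powr (p / 2) + 1 / 2 * norm (x b - x a) powr p)"
    if \<mu>: "\<mu> \<in> {1..d}" for \<mu> a b
  proof -
    have "J \<mu> a b = f \<mu> (x b) - f \<mu> (x a) - Df \<mu> (x a) (x b - x a - I a b)"
      unfolding J_def I_def by (simp add: blinfun.sum_right blinfun.scaleR_right)
    then show ?thesis
      using powr_norm_linearization_error_le[OF Df[OF \<mu>] D2f[OF \<mu>] Df_le[OF \<mu>] D2f_le[OF \<mu>], of "p / 2"] hp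
      by (simp add: L_def)
  qed
  have "pvar (p / 2) (J \<mu>) k l
      \<le> L * (pvar (p / 2) I k l powr (p / 2) + 1 / 2 * pvar_ts p x k l powr p) powr (2 / p)"
    if \<mu>: "\<mu> \<in> {1..d}" for \<mu>
    using pvar_le_of_pointwise[OF kl(1) _ _ _ _ pointwise[OF \<mu>]] hp C_nonneg
    unfolding pvar_ts_def L_def by simp
  then show ?thesis
    using hd unfolding Let_def I_def J_def L_def C_def by (subst Max_le_iff) (auto simp: mult.assoc)
qed

end
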